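(* Let $f: \mathbb{R}^n \to \mathbb{R}^n$ be topical. There exists $1 \le i \le n$ such that $\lim_{k\to\infty} f^k_i(y)/k = \overline{\chi}(f)$ for all $y \in \mathbb{R}^n$.
   Context: $f$ is topical if $f(x+h) = f(x)+h$ for all $h\in\mathbb{R}$ (scalar added to each coordinate) and $x\le y$ componentwise implies $f(x)\le f(y)$. The upper cycle time is $\overline{\chi}(f) = \lim_{k\to\infty} \max_i f^k_i(x)/k$, which exists and is independent of $x$. *)

theory Defs
  imports "HOL-Analysis.Analysis"
begin

definition topical :: "(real ^ 'n \<Rightarrow> real ^ 'n) \<Rightarrow> bool" where
  "topical f \<longleftrightarrow>
     (\<forall>x (h::real). f (x + (\<chi> i. h)) = f x + (\<chi> i. h)) \<and>
     (\<forall>x y. (\<forall>i. x $ i \<le> y $ i) \<longrightarrow> (\<forall>i. f x $ i \<le> f y $ i))"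

text \<open>Upper cycle time: limit of max_i f^k_i(x)/k, evaluated at x = 0
  (the limit exists and is independent of x for topical f).\<close>
definition upper_cycle_time :: "(real ^ 'n \<Rightarrow> real ^ 'n) \<Rightarrow> real" where
  "upper_cycle_time f = lim (\<lambda>k. Max (range (\<lambda>i. (f ^^ k) 0 $ i)) / real k)"

end

theory Submission
  imports Defs
begin

text \<open>Write \<open>\<chi>\<close> for the upper cycle time. The maximal entry of \<open>f\<^sup>k(0)\<close> is subadditive in \<open>k\<close>,
  so by Fekete's lemma it grows like \<open>k \<chi>\<close>; since topical maps are nonexpansive in the sup norm,
  this bounds every coordinate of every orbit from above. For the lower bound fix \<open>\<epsilon> > 0\<close>: the
  orbit of \<open>0\<close> under the topical map \<open>g = f - (\<chi> - \<epsilon>)\<close> is unbounded above. Where the running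
  maximum of that orbit exceeds \<open>0\<close> it is a sub-fixed point of \<open>g\<close>; normalising it to have
  maximal entry \<open>0\<close> and passing to a limit point in \<open>[-\<infinity>, 0]\<^sup>n\<close> yields a vector \<open>u\<close>, finite
  exactly on a nonempty set \<open>S\<close> of coordinates, with \<open>u \<le> g(u)\<close> on \<open>S\<close>. By monotonicity
  \<open>g\<^sup>k(u) \<ge> u\<close> on \<open>S\<close>, so for \<open>i \<in> S\<close> we get \<open>f\<^sup>k\<^sub>i(0) \<ge> k (\<chi> - \<epsilon>) - C\<close>. Only finitely
  many coordinates are available, so one of them works for a sequence \<open>\<epsilon> \<rightarrow> 0\<close>.\<close>

section \<open>Linear growth rates of real sequences\<close>

lemma subadditive_mult_add:
  fixes a :: "nat \<Rightarrow> real"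
  assumes sub: "\<And>k m. a (k + m) \<le> a k + a m"
  shows "a (q * p + s) \<le> real q * a p + a s"
proof (induction q)
  case (Suc q)
  have "a (Suc q * p + s) \<le> a p + a (q * p + s)"
    using sub[of p "q * p + s"] by (simp add: add.assoc)
  then show ?case
    using Suc.IH by (simp add: algebra_simps)
qed simp

lemma subadditive_linear_bound:
  fixes a :: "nat \<Rightarrow> real"
  assumes sub: "\<And>k m. a (k + m) \<le> a k + a m" and "p \<ge> 1"
  obtains R where "\<And>k. a k \<le> real k * (a p / real p) + R"
proof
  define R where "R = Max ((\<lambda>s. a s - real s * (a p / real p)) ` {..<p})"
  fix k
  have rem: "a (k mod p) - real (k mod p) * (a p / real p) \<le> R"
    unfolding R_def by (rule Max_ge) (use \<open>p \<ge> 1\<close> in auto)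
  have "real k = real (k div p) * real p + real (k mod p)"
    by (metis div_mult_mod_eq of_nat_add of_nat_mult)
  then have "real k * (a p / real p) = real (k div p) * a p + real (k mod p) * (a p / real p)"
    using \<open>p \<ge> 1\<close> by (simp add: field_simps)
  moreover have "a k \<le> real (k div p) * a p + a (k mod p)"
    using subadditive_mult_add[OF sub, of "k div p" p "k mod p"] by simp
  ultimately show "a k \<le> real k * (a p / real p) + R"
    using rem by linarith
qed

lemma subadditive_ratio_convergent:
  fixes a :: "nat \<Rightarrow> real"
  assumes sub: "\<And>k m. a (k + m) \<le> a k + a m" and bdd: "\<And>k. real k * \<mu> \<le> a k"
  obtains l where "(\<lambda>k. a k / real k) \<longlonglongrightarrow> l" and "\<And>k. real k * l \<le> a k"
proof
  define l where "l = (INF k\<in>{1..}. a k / real k)"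
  have bdd_below: "bdd_below ((\<lambda>k. a k / real k) ` {1..})"
    by (rule bdd_belowI2[of _ \<mu>]) (use bdd in \<open>auto simp: field_simps\<close>)
  have l_le: "l \<le> a k / real k" if "k \<ge> 1" for k
    unfolding l_def by (rule cINF_lower[OF bdd_below]) (use that in simp)
  show "real k * l \<le> a k" for k
  proof (cases "k = 0")
    case True
    then show ?thesis using sub[of 0 0] by simp
  next
    case False
    then show ?thesis using l_le[of k] by (simp add: field_simps)
  qed
  show "(\<lambda>k. a k / real k) \<longlonglongrightarrow> l"
  proof (rule order_tendstoI)
    fix x assume "x < l"
    then show "eventually (\<lambda>k. x < a k / real k) sequentially"
      unfolding eventually_sequentially using l_le by (meson order.strict_trans2)
  next
    fix x assume "l < x"
    then obtain p where p: "p \<ge> 1" "a p / real p < x"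
      using cINF_less_iff[OF _ bdd_below] unfolding l_def by auto
    obtain R where bound: "\<And>k. a k \<le> real k * (a p / real p) + R"
      using subadditive_linear_bound[OF sub p(1)] by blast
    have "(\<lambda>k. a p / real p + R / real k) \<longlonglongrightarrow> a p / real p"
      using tendsto_add[OF tendsto_const lim_const_over_n] by simp
    then have "eventually (\<lambda>k. a p / real p + R / real k < x) sequentially"
      using p(2) by (rule order_tendstoD)
    moreover have "eventually (\<lambda>k. a k / real k \<le> a p / real p + R / real k) sequentially"
      using eventually_gt_at_top[of 0] by eventually_elim (use bound in \<open>simp add: field_simps\<close>)
    ultimately show "eventually (\<lambda>k. a k / real k < x) sequentially"
      by eventually_elim simp
  qed
qed

lemma tendsto_ratio_squeeze:
  fixes a b :: "nat \<Rightarrow> real"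
  assumes upper: "\<And>k. a k \<le> b k" and b: "(\<lambda>k. b k / real k) \<longlonglongrightarrow> l"
    and lower: "\<And>\<epsilon>. \<epsilon> > 0 \<Longrightarrow> \<exists>C. \<forall>k. real k * (l - \<epsilon>) + C \<le> a k"
  shows "(\<lambda>k. a k / real k) \<longlonglongrightarrow> l"
proof (rule order_tendstoI)
  fix x assume "x < l"
  define \<epsilon> where "\<epsilon> = (l - x) / 2"
  have \<epsilon>: "\<epsilon> > 0" "x < l - \<epsilon>"
    using \<open>x < l\<close> by (auto simp: \<epsilon>_def field_simps)
  then obtain C where C: "\<And>k. real k * (l - \<epsilon>) + C \<le> a k"
    using lower by blast
  have "(\<lambda>k. (l - \<epsilon>) + C / real k) \<longlonglongrightarrow> l - \<epsilon>"
    using tendsto_add[OF tendsto_const lim_const_over_n] by simp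
  then have "eventually (\<lambda>k. x < (l - \<epsilon>) + C / real k) sequentially"
    using \<epsilon>(2) by (rule order_tendstoD)
  moreover have "eventually (\<lambda>k. (l - \<epsilon>) + C / real k \<le> a k / real k) sequentially"
    using eventually_gt_at_top[of 0]
  proof eventually_elim
    case (elim k)
    then have "(l - \<epsilon>) + C / real k = (real k * (l - \<epsilon>) + C) / real k"
      by (simp add: field_simps)
    also have "\<dots> \<le> a k / real k"
      by (rule divide_right_mono[OF C]) simp
    finally show ?case .
  qed
  ultimately show "eventually (\<lambda>k. x < a k / real k) sequentially"
    by eventually_elim simp
next
  fix x assume "l < x"
  from order_tendstoD(2)[OF b this]
  show "eventually (\<lambda>k. a k / real k < x) sequentially"
    by eventually_elim (meson upper divide_right_mono of_nat_0_le_iff le_less_trans)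
qed

section \<open>Topical maps\<close>

lemma topical_add_const: "topical f \<Longrightarrow> f (x + (\<chi> i. h)) = f x + (\<chi> i. h)"
  unfolding topical_def by blast

lemma topical_mono: "topical f \<Longrightarrow> (\<And>j. x $ j \<le> y $ j) \<Longrightarrow> f x $ i \<le> f y $ i"
  unfolding topical_def by blast

lemma topical_id: "topical id"
  unfolding topical_def by simp

lemma topical_comp: "topical f \<Longrightarrow> topical g \<Longrightarrow> topical (f \<circ> g)"
  unfolding topical_def by simp

lemma topical_funpow: "topical f \<Longrightarrow> topical (f ^^ k)"
  by (induction k) (simp_all add: topical_id topical_comp)

lemma topical_le_add_const:
  assumes "topical f" "\<And>j. x $ j \<le> y $ j + h"
  shows "f x $ i \<le> f y $ i + h"
proof -
  have "f x $ i \<le> f (y + (\<chi> i. h)) $ i"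
    by (rule topical_mono) (simp_all add: assms)
  then show ?thesis
    by (simp add: topical_add_const[OF assms(1)])
qed

lemma topical_component_dist_le_norm:
  assumes "topical f"
  shows "\<bar>f x $ i - f y $ i\<bar> \<le> norm (x - y)"
proof -
  have "x $ j \<le> y $ j + norm (x - y)" "y $ j \<le> x $ j + norm (x - y)" for j
    using component_le_norm_cart[of "x - y" j] by (auto simp: abs_le_iff)
  then have "f x $ i \<le> f y $ i + norm (x - y)" "f y $ i \<le> f x $ i + norm (x - y)"
    by (metis topical_le_add_const[OF assms])+
  then show ?thesis
    by linarith
qed

lemma topical_diff_const: "topical f \<Longrightarrow> topical (\<lambda>x. f x - (\<chi> i. l))"
  unfolding topical_def by (auto simp: algebra_simps)

lemma funpow_diff_const:
  assumes "topical f"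
  shows "((\<lambda>x. f x - (\<chi> i. l)) ^^ k) x = (f ^^ k) x - (\<chi> i. real k * l)"
proof (induction k)
  case 0
  then show ?case by (simp add: vec_eq_iff)
next
  case (Suc k)
  have "(f ^^ k) x - (\<chi> i. real k * l) = (f ^^ k) x + (\<chi> i. - real k * l)"
    by (simp add: vec_eq_iff)
  then have "((\<lambda>x. f x - (\<chi> i. l)) ^^ Suc k) x = f ((f ^^ k) x + (\<chi> i. - real k * l)) - (\<chi> i. l)"
    using Suc.IH by (metis funpow.simps(2) comp_apply)
  also have "\<dots> = (f ^^ Suc k) x - (\<chi> i. real (Suc k) * l)"
    by (simp add: topical_add_const[OF assms] vec_eq_iff algebra_simps)
  finally show ?case .
qed

definition orbit_max :: "(real ^ 'n \<Rightarrow> real ^ 'n) \<Rightarrow> nat \<Rightarrow> real" where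
  "orbit_max f k = Max (range (\<lambda>i. (f ^^ k) 0 $ i))"

lemma orbit_max_ge: "(f ^^ k) 0 $ i \<le> orbit_max f k"
  unfolding orbit_max_def by (rule Max_ge) auto

lemma orbit_max_attained: "\<exists>i. (f ^^ k) 0 $ i = orbit_max f k"
proof -
  have "orbit_max f k \<in> range (\<lambda>i. (f ^^ k) 0 $ i)"
    unfolding orbit_max_def by (rule Max_in) auto
  then show ?thesis by auto
qed

lemma orbit_max_subadditive:
  assumes "topical f"
  shows "orbit_max f (k + m) \<le> orbit_max f k + orbit_max f m"
proof -
  obtain i where i: "(f ^^ (k + m)) 0 $ i = orbit_max f (k + m)"
    using orbit_max_attained by blast
  have "(f ^^ (k + m)) 0 $ i = (f ^^ k) ((f ^^ m) 0) $ i"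
    by (simp add: funpow_add)
  also have "\<dots> \<le> (f ^^ k) 0 $ i + orbit_max f m"
    by (rule topical_le_add_const[OF topical_funpow[OF assms]]) (simp add: orbit_max_ge)
  also have "\<dots> \<le> orbit_max f k + orbit_max f m"
    by (simp add: orbit_max_ge)
  finally show ?thesis
    using i by simp
qed

lemma orbit_component_ge:
  assumes "topical f"
  shows "- real k * norm (f 0) \<le> (f ^^ k) 0 $ i"
proof (induction k)
  case (Suc k)
  have "\<bar>(f ^^ k) (f 0) $ i - (f ^^ k) 0 $ i\<bar> \<le> norm (f 0 - 0)"
    by (rule topical_component_dist_le_norm[OF topical_funpow[OF assms]])
  moreover have "(f ^^ Suc k) 0 = (f ^^ k) (f 0)"
    by (metis comp_apply funpow_Suc_right)
  ultimately show ?case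
    using Suc.IH by (simp add: algebra_simps abs_le_iff del: funpow.simps)
qed simp

lemma topical_upper_cycle_time:
  assumes "topical f"
  shows "(\<lambda>k. orbit_max f k / real k) \<longlonglongrightarrow> upper_cycle_time f"
    and "real k * upper_cycle_time f \<le> orbit_max f k"
proof -
  have "real k * - norm (f 0) \<le> orbit_max f k" for k
    using order_trans[OF orbit_component_ge[OF assms] orbit_max_ge] by simp
  then obtain l where l: "(\<lambda>k. orbit_max f k / real k) \<longlonglongrightarrow> l" "\<And>k. real k * l \<le> orbit_max f k"
    using subadditive_ratio_convergent orbit_max_subadditive[OF assms] by blast
  moreover have "upper_cycle_time f = l"
    using l(1) unfolding upper_cycle_time_def orbit_max_def by (rule limI)
  ultimately show "(\<lambda>k. orbit_max f k / real k) \<longlonglongrightarrow> upper_cycle_time f"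
    and "real k * upper_cycle_time f \<le> orbit_max f k"
    by simp_all
qed

section \<open>A coordinate of the orbit bounded below\<close>

definition orbit_running_max :: "(real ^ 'n \<Rightarrow> real ^ 'n) \<Rightarrow> real ^ 'n \<Rightarrow> nat \<Rightarrow> real ^ 'n" where
  "orbit_running_max g x N = (\<chi> j. MAX k\<in>{..N}. (g ^^ k) x $ j)"

lemma orbit_running_max_ge: "k \<le> N \<Longrightarrow> (g ^^ k) x $ j \<le> orbit_running_max g x N $ j"
  unfolding orbit_running_max_def by (auto intro!: Max_ge)

lemma orbit_running_max_attained: "\<exists>k\<le>N. orbit_running_max g x N $ j = (g ^^ k) x $ j"
proof -
  have "orbit_running_max g x N $ j \<in> (\<lambda>k. (g ^^ k) x $ j) ` {..N}"
    unfolding orbit_running_max_def by (auto intro!: Max_in)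
  then show ?thesis by auto
qed

lemma orbit_running_max_subfixed:
  assumes "topical g" and "x $ i < orbit_running_max g x N $ i"
  shows "orbit_running_max g x N $ i \<le> g (orbit_running_max g x N) $ i"
proof -
  obtain k where k: "k \<le> N" "orbit_running_max g x N $ i = (g ^^ k) x $ i"
    using orbit_running_max_attained by blast
  with assms(2) obtain k' where k': "k = Suc k'"
    by (cases k) auto
  have "(g ^^ k') x $ j \<le> orbit_running_max g x N $ j" for j
    using k k' by (intro orbit_running_max_ge) simp
  then have "g ((g ^^ k') x) $ i \<le> g (orbit_running_max g x N) $ i"
    by (rule topical_mono[OF assms(1)])
  then show ?thesis
    using k k' by simp
qed

lemma topical_normalized_running_max:
  assumes "topical g"
  obtains Y c where "\<And>N j. Y N $ j \<le> 0" and "\<And>N. \<exists>j. Y N $ j = 0"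
    and "\<And>N i. (g ^^ N) 0 $ i \<le> c N" and "mono c"
    and "\<And>N i. - c N < Y N $ i \<Longrightarrow> Y N $ i \<le> g (Y N) $ i"
proof
  define z where "z = orbit_running_max g 0"
  define c where "c N = Max (range (\<lambda>j. z N $ j))" for N
  define Y where "Y N = z N + (\<chi> j. - c N)" for N
  have z_le_c: "z N $ j \<le> c N" for N j
    unfolding c_def by (rule Max_ge) auto
  have c_attained: "\<exists>j. z N $ j = c N" for N
  proof -
    have "c N \<in> range (\<lambda>j. z N $ j)"
      unfolding c_def by (rule Max_in) auto
    then show ?thesis by auto
  qed
  show "Y N $ j \<le> 0" for N j
    using z_le_c by (simp add: Y_def)
  show "\<exists>j. Y N $ j = 0" for N
    using c_attained by (simp add: Y_def)
  show "(g ^^ N) 0 $ i \<le> c N" for N i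
    using orbit_running_max_ge[of N N g 0 i] z_le_c[of N i] by (simp add: z_def)
  show "mono c"
  proof
    fix N N' :: nat assume "N \<le> N'"
    obtain j where "z N $ j = c N" using c_attained by blast
    moreover have "z N $ j \<le> z N' $ j"
      unfolding z_def orbit_running_max_def using \<open>N \<le> N'\<close> by (auto intro!: Max_mono)
    ultimately show "c N \<le> c N'"
      using z_le_c[of N' j] by simp
  qed
  show "Y N $ i \<le> g (Y N) $ i" if "- c N < Y N $ i" for N i
  proof -
    have "0 $ i < orbit_running_max g 0 N $ i"
      using that by (simp add: Y_def z_def)
    then have "z N $ i \<le> g (z N) $ i"
      unfolding z_def by (rule orbit_running_max_subfixed[OF assms])
    then show ?thesis
      by (simp add: Y_def topical_add_const[OF assms])
  qed
qed

text \<open>Sequential compactness of \<open>[-\<infinity>, 0]\<^sup>n\<close>, transported from \<open>[0, 1]\<^sup>n\<close> by \<open>exp\<close>.\<close>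
lemma nonpos_vector_seq_extended_limit:
  fixes Y :: "nat \<Rightarrow> real ^ 'n"
  assumes nonpos: "\<And>N j. Y N $ j \<le> 0" and zero: "\<And>N. \<exists>j. Y N $ j = 0"
  obtains r S u where "strict_mono r" and "S \<noteq> {}"
    and "\<And>j. j \<in> S \<Longrightarrow> (\<lambda>m. Y (r m) $ j) \<longlonglongrightarrow> u $ j"
    and "\<And>j. j \<notin> S \<Longrightarrow> filterlim (\<lambda>m. Y (r m) $ j) at_bot sequentially"
proof -
  define E where "E N = (\<chi> j. exp (Y N $ j))" for N
  have "E N \<in> cbox 0 1" for N
    using nonpos by (simp add: E_def mem_box_cart)
  then obtain r w where r: "strict_mono r" and w: "(E \<circ> r) \<longlonglongrightarrow> w"
    using seq_compactE[OF compact_imp_seq_compact[OF compact_cbox], of E 0 1] by blast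
  have E_lim: "(\<lambda>m. exp (Y (r m) $ j)) \<longlonglongrightarrow> w $ j" for j
    using tendsto_vec_nth[OF w, of j] by (simp add: E_def o_def)
  define S where "S = {j. 0 < w $ j}"
  show thesis
  proof
    show "strict_mono r" by (fact r)
    show "(\<lambda>m. Y (r m) $ j) \<longlonglongrightarrow> (\<chi> j. ln (w $ j)) $ j" if "j \<in> S" for j
      using tendsto_ln[OF E_lim[of j]] that by (simp add: S_def)
    show "filterlim (\<lambda>m. Y (r m) $ j) at_bot sequentially" if "j \<notin> S" for j
    proof -
      have "0 \<le> w $ j"
        using E_lim by (rule LIMSEQ_le_const) (simp add: less_imp_le)
      with that have "w $ j = 0"
        by (simp add: S_def)
      then have "(\<lambda>m. exp (Y (r m) $ j)) \<longlonglongrightarrow> 0"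
        using E_lim[of j] by simp
      then have "filterlim (\<lambda>m. exp (Y (r m) $ j)) (at_right 0) sequentially"
        by (rule tendsto_imp_filterlim_at_right) simp
      from filterlim_compose[OF ln_at_0 this] show ?thesis
        by simp
    qed
    have "1 \<le> (\<Sum>j\<in>UNIV. exp (Y (r m) $ j))" for m
    proof -
      obtain j where "Y (r m) $ j = 0" using zero by blast
      then show ?thesis
        using member_le_sum[of j UNIV "\<lambda>j. exp (Y (r m) $ j)"] by simp
    qed
    then have "1 \<le> (\<Sum>j\<in>UNIV. w $ j)"
      by (intro LIMSEQ_le_const[OF tendsto_sum[OF E_lim]]) simp
    show "S \<noteq> {}"
    proof
      assume "S = {}"
      then have "(\<Sum>j\<in>UNIV. w $ j) \<le> 0"
        by (intro sum_nonpos) (auto simp: S_def not_less)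
      with \<open>1 \<le> (\<Sum>j\<in>UNIV. w $ j)\<close> show False
        by simp
    qed
  qed
qed

text \<open>\<open>fill_outside S u L\<close> approximates the vector that equals \<open>u\<close> on \<open>S\<close> and \<open>-\<infinity>\<close> off \<open>S\<close>.
  For monotone \<open>g\<close>, \<open>g (fill_outside S u L)\<close> decreases as \<open>L\<close> grows, so \<open>extended_subfixed g S u\<close>
  says that this extended vector is a sub-fixed point of \<open>g\<close> on \<open>S\<close>.\<close>
definition fill_outside :: "'n set \<Rightarrow> real ^ 'n \<Rightarrow> real \<Rightarrow> real ^ 'n" where
  "fill_outside S u L = (\<chi> j. if j \<in> S then u $ j else - L)"

definition extended_subfixed :: "(real ^ 'n \<Rightarrow> real ^ 'n) \<Rightarrow> 'n set \<Rightarrow> real ^ 'n \<Rightarrow> bool" where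
  "extended_subfixed g S u \<longleftrightarrow> (\<forall>L. \<forall>j\<in>S. u $ j \<le> g (fill_outside S u L) $ j)"

lemma eventually_le_fill_outside:
  fixes Z :: "nat \<Rightarrow> real ^ 'n"
  assumes conv: "\<And>j. j \<in> S \<Longrightarrow> (\<lambda>m. Z m $ j) \<longlonglongrightarrow> u $ j"
    and diverge: "\<And>j. j \<notin> S \<Longrightarrow> filterlim (\<lambda>m. Z m $ j) at_bot sequentially"
    and "e > 0"
  shows "eventually (\<lambda>m. \<forall>j. Z m $ j \<le> fill_outside S u L $ j + e) sequentially"
proof (rule eventually_all_finite)
  fix j
  show "eventually (\<lambda>m. Z m $ j \<le> fill_outside S u L $ j + e) sequentially"
  proof (cases "j \<in> S")
    case True
    have "u $ j < u $ j + e" using \<open>e > 0\<close> by simp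
    from order_tendstoD(2)[OF conv[OF True] this] show ?thesis
      by eventually_elim (simp add: fill_outside_def True)
  next
    case False
    from diverge[OF False] have "eventually (\<lambda>m. Z m $ j \<le> - L + e) sequentially"
      by (simp add: filterlim_at_bot)
    then show ?thesis
      by (simp add: fill_outside_def False)
  qed
qed

lemma extended_subfixed_of_limit:
  fixes g :: "real ^ 'n \<Rightarrow> real ^ 'n" and Z :: "nat \<Rightarrow> real ^ 'n"
  assumes "topical g"
    and conv: "\<And>j. j \<in> S \<Longrightarrow> (\<lambda>m. Z m $ j) \<longlonglongrightarrow> u $ j"
    and diverge: "\<And>j. j \<notin> S \<Longrightarrow> filterlim (\<lambda>m. Z m $ j) at_bot sequentially"
    and c: "filterlim c at_top sequentially"
    and sub: "\<And>m i. - c m < Z m $ i \<Longrightarrow> Z m $ i \<le> g (Z m) $ i"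
  shows "extended_subfixed g S u"
  unfolding extended_subfixed_def
proof (intro allI ballI)
  fix L i assume "i \<in> S"
  show "u $ i \<le> g (fill_outside S u L) $ i"
  proof (rule field_le_epsilon)
    fix e :: real assume "0 < e"
    have close: "eventually (\<lambda>m. \<forall>j. Z m $ j \<le> fill_outside S u L $ j + e / 2) sequentially"
      using conv diverge half_gt_zero[OF \<open>0 < e\<close>] by (rule eventually_le_fill_outside)
    have "u $ i - e / 2 < u $ i" using \<open>0 < e\<close> by simp
    from order_tendstoD(1)[OF conv[OF \<open>i \<in> S\<close>] this]
    have near: "eventually (\<lambda>m. u $ i - e / 2 < Z m $ i) sequentially" .
    have "filterlim (\<lambda>m. Z m $ i + c m) at_top sequentially"
      by (rule filterlim_tendsto_add_at_top[OF conv[OF \<open>i \<in> S\<close>] c])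
    then have active: "eventually (\<lambda>m. - c m < Z m $ i) sequentially"
      unfolding filterlim_at_top_dense by (auto elim!: allE[of _ 0] eventually_mono)
    from close near active have "eventually (\<lambda>m. (\<forall>j. Z m $ j \<le> fill_outside S u L $ j + e / 2)
        \<and> u $ i - e / 2 < Z m $ i \<and> - c m < Z m $ i) sequentially"
      by eventually_elim blast
    then obtain m where m: "\<And>j. Z m $ j \<le> fill_outside S u L $ j + e / 2"
        "u $ i - e / 2 < Z m $ i" "- c m < Z m $ i"
      using eventually_happens'[OF trivial_limit_sequentially] by blast
    have "Z m $ i \<le> g (Z m) $ i"
      using m(3) by (rule sub)
    also have "\<dots> \<le> g (fill_outside S u L) $ i + e / 2"
      using m(1) by (rule topical_le_add_const[OF assms(1)])
    finally show "u $ i \<le> g (fill_outside S u L) $ i + e"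
      using m(2) by linarith
  qed
qed

lemma extended_subfixed_orbit_bounded_below:
  assumes "topical g" and "extended_subfixed g S u" and "i \<in> S"
  shows "\<exists>C. \<forall>k. C \<le> (g ^^ k) 0 $ i"
proof -
  let ?v = "fill_outside S u"
  have orbit_ge: "\<exists>L. \<forall>j. ?v L $ j \<le> (g ^^ k) (?v 0) $ j" for k
  proof (induction k)
    case 0
    show ?case by auto
  next
    case (Suc k)
    then obtain L where L: "\<And>j. ?v L $ j \<le> (g ^^ k) (?v 0) $ j"
      by blast
    have "?v (norm (g (?v L))) $ j \<le> (g ^^ Suc k) (?v 0) $ j" for j
    proof -
      have "?v (norm (g (?v L))) $ j \<le> g (?v L) $ j"
        using assms(2) component_le_norm_cart[of "g (?v L)" j]
        by (auto simp: extended_subfixed_def fill_outside_def abs_le_iff)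
      also have "\<dots> \<le> (g ^^ Suc k) (?v 0) $ j"
        using topical_mono[OF assms(1) L] by simp
      finally show ?thesis .
    qed
    then show ?case by blast
  qed
  have "u $ i - norm (?v 0) \<le> (g ^^ k) 0 $ i" for k
  proof -
    obtain L where "?v L $ i \<le> (g ^^ k) (?v 0) $ i"
      using orbit_ge by blast
    then have "u $ i \<le> (g ^^ k) (?v 0) $ i"
      using assms(3) by (simp add: fill_outside_def)
    moreover have "\<bar>(g ^^ k) (?v 0) $ i - (g ^^ k) 0 $ i\<bar> \<le> norm (?v 0)"
      using topical_component_dist_le_norm[OF topical_funpow[OF assms(1)], of k "?v 0" i 0] by simp
    ultimately show ?thesis
      by linarith
  qed
  then show ?thesis by blast
qed

lemma topical_orbit_component_bounded_below:
  assumes "topical g" and unbounded: "\<And>B. \<exists>N i. B < (g ^^ N) 0 $ i"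
  shows "\<exists>i C. \<forall>k. C \<le> (g ^^ k) 0 $ i"
proof -
  obtain Y c where Y_nonpos: "\<And>N j. Y N $ j \<le> 0" and Y_zero: "\<And>N. \<exists>j. Y N $ j = 0"
    and c_ge: "\<And>N i. (g ^^ N) 0 $ i \<le> c N" and "mono c"
    and Y_sub: "\<And>N i. - c N < Y N $ i \<Longrightarrow> Y N $ i \<le> g (Y N) $ i"
    by (rule topical_normalized_running_max[OF assms(1)]) blast
  have c: "filterlim c at_top sequentially"
    unfolding filterlim_at_top_dense eventually_sequentially
  proof
    fix B
    obtain N i where "B < (g ^^ N) 0 $ i"
      using unbounded by blast
    with c_ge[of N i] have "B < c N"
      by linarith
    then have "B < c n" if "N \<le> n" for n
      using monoD[OF \<open>mono c\<close> that] by linarith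
    then show "\<exists>N. \<forall>n\<ge>N. B < c n"
      by blast
  qed
  obtain r S u where r: "strict_mono r" and "S \<noteq> {}"
    and conv: "\<And>j. j \<in> S \<Longrightarrow> (\<lambda>m. Y (r m) $ j) \<longlonglongrightarrow> u $ j"
    and diverge: "\<And>j. j \<notin> S \<Longrightarrow> filterlim (\<lambda>m. Y (r m) $ j) at_bot sequentially"
    by (rule nonpos_vector_seq_extended_limit[of Y, OF Y_nonpos Y_zero]) blast
  have "extended_subfixed g S u"
    using assms(1) conv diverge filterlim_compose[OF c filterlim_subseq[OF r]] Y_sub
    by (rule extended_subfixed_of_limit)
  moreover obtain i where "i \<in> S"
    using \<open>S \<noteq> {}\<close> by blast
  ultimately have "\<exists>C. \<forall>k. C \<le> (g ^^ k) 0 $ i"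
    by (rule extended_subfixed_orbit_bounded_below[OF assms(1)])
  then show ?thesis
    by blast
qed

section \<open>The coordinate attaining the upper cycle time\<close>

lemma topical_component_lower_growth:
  assumes "topical f" and "\<epsilon> > 0"
  shows "\<exists>i C. \<forall>k. real k * (upper_cycle_time f - \<epsilon>) + C \<le> (f ^^ k) 0 $ i"
proof -
  define g where "g x = f x - (\<chi> i. upper_cycle_time f - \<epsilon>)" for x
  have g_orbit: "(g ^^ k) 0 $ i = (f ^^ k) 0 $ i - real k * (upper_cycle_time f - \<epsilon>)" for k i
    unfolding g_def[abs_def] by (simp add: funpow_diff_const[OF assms(1)])
  have "\<exists>N i. B < (g ^^ N) 0 $ i" for B
  proof -
    obtain N where "B < real N * \<epsilon>"
      using ex_less_of_nat_mult[OF \<open>\<epsilon> > 0\<close>] by blast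
    moreover obtain i where "(f ^^ N) 0 $ i = orbit_max f N"
      using orbit_max_attained by blast
    ultimately have "B < (g ^^ N) 0 $ i"
      using topical_upper_cycle_time(2)[OF assms(1), of N] by (simp add: g_orbit algebra_simps)
    then show ?thesis by blast
  qed
  moreover have "topical g"
    unfolding g_def[abs_def] by (rule topical_diff_const[OF assms(1)])
  ultimately obtain i C where "\<forall>k. C \<le> (g ^^ k) 0 $ i"
    using topical_orbit_component_bounded_below by blast
  then show ?thesis
    by (auto simp: g_orbit algebra_simps)
qed

lemma topical_component_attains_upper_cycle_time:
  assumes "topical f"
  shows "\<exists>i. \<forall>\<epsilon>>0. \<exists>C. \<forall>k. real k * (upper_cycle_time f - \<epsilon>) + C \<le> (f ^^ k) 0 $ i"
proof -
  have "\<exists>i C. \<forall>k. real k * (upper_cycle_time f - 1 / Suc m) + C \<le> (f ^^ k) 0 $ i" for m :: nat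
    by (rule topical_component_lower_growth[OF assms]) simp
  then obtain I where I: "\<And>m. \<exists>C. \<forall>k. real k * (upper_cycle_time f - 1 / Suc m) + C \<le> (f ^^ k) 0 $ I m"
    by metis
  obtain i where i: "infinite {m. I m = i}"
    using pigeonhole_infinite[of UNIV I] by auto
  have "\<exists>C. \<forall>k. real k * (upper_cycle_time f - \<epsilon>) + C \<le> (f ^^ k) 0 $ i" if "\<epsilon> > 0" for \<epsilon>
  proof -
    obtain m0 where m0: "inverse (real (Suc m0)) < \<epsilon>"
      using reals_Archimedean[OF \<open>\<epsilon> > 0\<close>] by blast
    obtain m where "m0 \<le> m" "I m = i"
      using i unfolding infinite_nat_iff_unbounded_le by blast
    have "1 / real (Suc m) \<le> 1 / real (Suc m0)"
      using \<open>m0 \<le> m\<close> by (intro divide_left_mono) auto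
    with m0 have "1 / Suc m < \<epsilon>"
      by (simp add: inverse_eq_divide)
    obtain C where C: "\<And>k. real k * (upper_cycle_time f - 1 / Suc m) + C \<le> (f ^^ k) 0 $ i"
      using I[of m] \<open>I m = i\<close> by blast
    have "real k * (upper_cycle_time f - \<epsilon>) \<le> real k * (upper_cycle_time f - 1 / Suc m)" for k
      using \<open>1 / Suc m < \<epsilon>\<close> by (intro mult_left_mono) auto
    with C show ?thesis
      by (meson add_right_mono order_trans)
  qed
  then show ?thesis by blast
qed

lemma topical_component_tendsto_upper_cycle_time:
  assumes "topical f"
    and lower: "\<And>\<epsilon>. \<epsilon> > 0 \<Longrightarrow> \<exists>C. \<forall>k. real k * (upper_cycle_time f - \<epsilon>) + C \<le> (f ^^ k) 0 $ i"
  shows "(\<lambda>k. (f ^^ k) y $ i / real k) \<longlonglongrightarrow> upper_cycle_time f"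
proof (rule tendsto_ratio_squeeze)
  have dist: "\<bar>(f ^^ k) y $ i - (f ^^ k) 0 $ i\<bar> \<le> norm y" for k
    using topical_component_dist_le_norm[OF topical_funpow[OF assms(1)], of k y i 0] by simp
  show "(f ^^ k) y $ i \<le> orbit_max f k + norm y" for k
    using dist[of k] orbit_max_ge[of k f i] by (simp add: abs_le_iff)
  show "(\<lambda>k. (orbit_max f k + norm y) / real k) \<longlonglongrightarrow> upper_cycle_time f"
    using tendsto_add[OF topical_upper_cycle_time(1)[OF assms(1)] lim_const_over_n[of "norm y"]]
    by (simp add: add_divide_distrib)
  show "\<exists>C. \<forall>k. real k * (upper_cycle_time f - \<epsilon>) + C \<le> (f ^^ k) y $ i" if "\<epsilon> > 0" for \<epsilon>
  proof -
    obtain C where C: "\<And>k. real k * (upper_cycle_time f - \<epsilon>) + C \<le> (f ^^ k) 0 $ i"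
      using lower \<open>\<epsilon> > 0\<close> by blast
    have "real k * (upper_cycle_time f - \<epsilon>) + (C - norm y) \<le> (f ^^ k) y $ i" for k
      using C[of k] dist[of k] by linarith
    then show ?thesis
      by blast
  qed
qed

theorem corollary2p5:
  fixes f :: "real ^ 'n \<Rightarrow> real ^ 'n"
  assumes "topical f"
  shows "\<exists>i. \<forall>y. (\<lambda>k. (f ^^ k) y $ i / real k) \<longlonglongrightarrow> upper_cycle_time f"
proof -
  obtain i where "\<And>\<epsilon>. \<epsilon> > 0 \<Longrightarrow> \<exists>C. \<forall>k. real k * (upper_cycle_time f - \<epsilon>) + C \<le> (f ^^ k) 0 $ i"
    using topical_component_attains_upper_cycle_time[OF assms] by blast
  then have "(\<lambda>k. (f ^^ k) y $ i / real k) \<longlonglongrightarrow> upper_cycle_time f" for y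
    by (rule topical_component_tendsto_upper_cycle_time[OF assms])
  then show ?thesis
    by blast
qed

end
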